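(* Fix $a'\in(-1,1)$. For $d\in(0,\sqrt{1-a'^2})$ let $r=\sqrt{a'^2+d^2}$, $H=-\frac1r-a'$ and $c=\frac{a'}{r}-\frac{d^2}{2}$ (the energy and constant $c$ of the planar Stark solution with $(x(0),y(0))=(a',d)$, $(\dot x(0),\dot y(0))=(0,0)$), and define $$T_\xi=4\int_0^{\xi_1}\frac{d\xi}{\sqrt{\xi^4+2H\xi^2+2(c+1)}},\quad \xi_1^2=-H-\sqrt{H^2-2(c+1)},$$ $$T_\eta=4\int_0^{\eta_1}\frac{d\eta}{\sqrt{-\eta^4+2H\eta^2-2(c-1)}},\quad \eta_1^2=H+\sqrt{H^2-2(c-1)}.$$ Then $T_\xi/T_\eta$ is a monotone function of $d\in(0,\sqrt{1-a'^2})$.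
   Context: $T_\xi$ and $T_\eta$ are the periods, in the regularized time $\tau$ (with $dt=(\xi^2+\eta^2)d\tau$), of the parabolic coordinates $\xi^2=r+x$, $\eta^2=r-x$ of that solution of the planar Stark problem $\ddot x=-x/r^3+1$, $\ddot y=-y/r^3$. *)

theory Defs
  imports "HOL-Analysis.Analysis"
begin

definition stark_r :: "real \<Rightarrow> real \<Rightarrow> real" where
  "stark_r a d = sqrt (a\<^sup>2 + d\<^sup>2)"

definition stark_H :: "real \<Rightarrow> real \<Rightarrow> real" where
  "stark_H a d = - 1 / stark_r a d - a"

definition stark_c :: "real \<Rightarrow> real \<Rightarrow> real" where
  "stark_c a d = a / stark_r a d - d\<^sup>2 / 2"

definition xi1 :: "real \<Rightarrow> real \<Rightarrow> real" where
  "xi1 a d = sqrt (- stark_H a d - sqrt ((stark_H a d)\<^sup>2 - 2 * (stark_c a d + 1)))"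

definition eta1 :: "real \<Rightarrow> real \<Rightarrow> real" where
  "eta1 a d = sqrt (stark_H a d + sqrt ((stark_H a d)\<^sup>2 - 2 * (stark_c a d - 1)))"

text \<open>Periods (Henstock-Kurzweil integrals; the integrands have integrable
  inverse-square-root singularities at the upper endpoint).\<close>

definition T_xi :: "real \<Rightarrow> real \<Rightarrow> real" where
  "T_xi a d = 4 * integral {0..xi1 a d}
     (\<lambda>\<xi>. 1 / sqrt (\<xi>^4 + 2 * stark_H a d * \<xi>\<^sup>2 + 2 * (stark_c a d + 1)))"

definition T_eta :: "real \<Rightarrow> real \<Rightarrow> real" where
  "T_eta a d = 4 * integral {0..eta1 a d}
     (\<lambda>\<eta>. 1 / sqrt (- (\<eta>^4) + 2 * stark_H a d * \<eta>\<^sup>2 - 2 * (stark_c a d - 1)))"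

end

theory Submission
  imports Defs
begin

text \<open>With \<open>r = sqrt (a\<^sup>2 + d\<^sup>2)\<close>, which increases with \<open>d\<close>, both quartics split into a
  factor vanishing at the turning point (\<open>\<xi>\<^sub>1\<^sup>2 = r + a\<close>, \<open>\<eta>\<^sub>1\<^sup>2 = r - a\<close>) and a
  second quadratic factor. Rescaling the variable to the turning point turns each quarter period
  into an integral of \<open>1 / sqrt (\<alpha> (t\<^sup>2))\<close> against the weight \<open>1 / sqrt (1 - t\<^sup>2)\<close> on
  \<open>[0, 1]\<close>, with \<open>\<alpha>\<close> affine. For radii \<open>x \<le> y\<close> the affine factors satisfy the cross
  inequality \<open>\<beta>\<^sub>x u * \<alpha>\<^sub>y s \<le> \<alpha>\<^sub>x s * \<beta>\<^sub>y u\<close> on \<open>[0, 1]\<^sup>2\<close>, so one constant \<open>C\<close>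
  satisfies \<open>C * \<alpha>\<^sub>y \<le> \<alpha>\<^sub>x\<close> and \<open>\<beta>\<^sub>x \<le> C * \<beta>\<^sub>y\<close>; integrating shows that
  \<open>T\<^sub>\<xi> / T\<^sub>\<eta>\<close> increases with \<open>r\<close>, hence with \<open>d\<close>.\<close>

lemma ratio_separating_constant:
  fixes \<alpha> \<alpha>' \<beta> \<beta>' :: "'a \<Rightarrow> real"
  assumes "S \<noteq> {}"
    and pos: "\<And>s. s \<in> S \<Longrightarrow> 0 < \<alpha>' s" "\<And>u. u \<in> S \<Longrightarrow> 0 < \<beta>' u"
    and cross: "\<And>s u. s \<in> S \<Longrightarrow> u \<in> S \<Longrightarrow> \<beta> u * \<alpha>' s \<le> \<alpha> s * \<beta>' u"
  obtains C where "\<And>s. s \<in> S \<Longrightarrow> C * \<alpha>' s \<le> \<alpha> s" and "\<And>u. u \<in> S \<Longrightarrow> \<beta> u \<le> C * \<beta>' u"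
proof
  define C where "C = (SUP u\<in>S. \<beta> u / \<beta>' u)"
  have ratio_le: "\<beta> u / \<beta>' u \<le> \<alpha> s / \<alpha>' s" if "s \<in> S" "u \<in> S" for s u
    using cross[OF that] pos[OF that(1)] pos(2)[OF that(2)] by (simp add: divide_simps mult.commute)
  obtain s0 where "s0 \<in> S" using assms(1) by blast
  then have bdd: "bdd_above ((\<lambda>u. \<beta> u / \<beta>' u) ` S)"
    using ratio_le by (intro bdd_aboveI2) blast
  show "\<beta> u \<le> C * \<beta>' u" if "u \<in> S" for u
  proof -
    have "\<beta> u / \<beta>' u \<le> C" unfolding C_def using bdd that by (rule cSUP_upper2) simp
    then show ?thesis using pos(2)[OF that] by (simp add: divide_le_eq)
  qed
  show "C * \<alpha>' s \<le> \<alpha> s" if "s \<in> S" for s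
  proof -
    have "C \<le> \<alpha> s / \<alpha>' s" unfolding C_def using assms(1) ratio_le that by (intro cSUP_least) auto
    then show ?thesis using pos(1)[OF that] by (simp add: le_divide_eq)
  qed
qed

definition cheb_integral :: "(real \<Rightarrow> real) \<Rightarrow> real" where
  "cheb_integral f = integral {0..1} (\<lambda>t. f t / sqrt (1 - t\<^sup>2))"

lemma has_integral_cheb_weight: "((\<lambda>t. 1 / sqrt (1 - t\<^sup>2)) has_integral pi / 2) {0..1}"
proof -
  have "((\<lambda>t. 1 / sqrt (1 - t\<^sup>2)) has_integral (arcsin 1 - arcsin 0)) {0..1}"
  proof (rule fundamental_theorem_of_calculus_interior)
    show "continuous_on {0..1} arcsin"
      by (rule continuous_on_subset[OF continuous_on_arcsin']) auto
    fix t :: real assume "t \<in> {0<..<1}"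
    then have "DERIV arcsin t :> inverse (sqrt (1 - t\<^sup>2))" by (intro DERIV_arcsin) auto
    then show "(arcsin has_vector_derivative 1 / sqrt (1 - t\<^sup>2)) (at t)"
      by (simp add: has_real_derivative_iff_has_vector_derivative[symmetric] divide_inverse)
  qed simp
  then show ?thesis by simp
qed

lemma has_integral_cheb_integral:
  assumes "continuous_on {0..1} f"
  shows "((\<lambda>t. f t / sqrt (1 - t\<^sup>2)) has_integral cheb_integral f) {0..1}"
proof -
  have "(\<lambda>t. 1 / sqrt (1 - t\<^sup>2)) absolutely_integrable_on {0..1}"
    using has_integral_cheb_weight
    by (intro nonnegative_absolutely_integrable_1) (auto simp: power_le_one)
  then have "(\<lambda>t. f t * (1 / sqrt (1 - t\<^sup>2))) absolutely_integrable_on {0..1}"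
    using assms
    by (intro absolutely_integrable_bounded_measurable_product_real continuous_imp_measurable_on_sets_lebesgue
        compact_imp_bounded compact_continuous_image) auto
  then show ?thesis
    by (simp add: cheb_integral_def absolutely_integrable_on_def integrable_integral)
qed

lemma cheb_integral_mono:
  assumes "continuous_on {0..1} f" "continuous_on {0..1} g" "\<And>t. t \<in> {0..1} \<Longrightarrow> f t \<le> g t"
  shows "cheb_integral f \<le> cheb_integral g"
  unfolding cheb_integral_def
  using has_integral_cheb_integral[OF assms(1)] has_integral_cheb_integral[OF assms(2)]
  by (intro integral_le) (auto intro!: divide_right_mono assms(3) simp: power_le_one)

lemma cheb_integral_cmult: "cheb_integral (\<lambda>t. k * f t) = k * cheb_integral f"
  using integral_cmul[where c = k and f = "\<lambda>t. f t / sqrt (1 - t\<^sup>2)" and S = "{0..1}"]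
  by (simp add: cheb_integral_def)

lemma cheb_integral_pos:
  assumes "continuous_on {0..1} f" "\<And>t. t \<in> {0..1} \<Longrightarrow> 0 < f t"
  shows "0 < cheb_integral f"
proof -
  obtain t0 where t0: "t0 \<in> {0..1}" and min: "\<And>t. t \<in> {0..1} \<Longrightarrow> f t0 \<le> f t"
    using continuous_attains_inf[OF compact_Icc _ assms(1)] by auto
  have "0 < f t0 * (pi / 2)"
    using assms(2)[OF t0] by simp
  also have "f t0 * (pi / 2) = cheb_integral (\<lambda>_. f t0)"
    using integral_unique[OF has_integral_cheb_weight] cheb_integral_cmult[of "f t0" "\<lambda>_. 1"]
    by (simp add: cheb_integral_def)
  also have "\<dots> \<le> cheb_integral f"
    using assms(1) min by (intro cheb_integral_mono) auto
  finally show ?thesis .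
qed

lemma cheb_integral_ratio_le:
  assumes cont: "continuous_on {0..1} f" "continuous_on {0..1} g"
      "continuous_on {0..1} f'" "continuous_on {0..1} g'"
    and pos: "\<And>t. t \<in> {0..1} \<Longrightarrow> 0 < f t" "\<And>t. t \<in> {0..1} \<Longrightarrow> 0 < g' t"
    and "0 < k"
    and le: "\<And>t. t \<in> {0..1} \<Longrightarrow> k * f t \<le> f' t" "\<And>t. t \<in> {0..1} \<Longrightarrow> g' t \<le> k * g t"
  shows "cheb_integral f / cheb_integral g \<le> cheb_integral f' / cheb_integral g'"
proof -
  have f: "k * cheb_integral f \<le> cheb_integral f'"
    using cont le(1) by (subst cheb_integral_cmult[symmetric], intro cheb_integral_mono continuous_intros)
  have g: "cheb_integral g' \<le> k * cheb_integral g"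
    using cont le(2) by (subst cheb_integral_cmult[symmetric], intro cheb_integral_mono continuous_intros)
  have "0 < cheb_integral f" "0 < cheb_integral g'"
    using cheb_integral_pos cont pos by blast+
  with \<open>0 < k\<close> have "0 < k * cheb_integral f"
    by simp
  with f have "0 \<le> cheb_integral f'"
    by linarith
  with f g \<open>0 < k\<close> \<open>0 < cheb_integral g'\<close>
  have "(k * cheb_integral f) / (k * cheb_integral g) \<le> cheb_integral f' / cheb_integral g'"
    by (intro frac_le) auto
  then show ?thesis using \<open>0 < k\<close> by simp
qed

lemma cheb_integral_inverse_sqrt_ratio_le:
  fixes \<alpha> \<alpha>' \<beta> \<beta>' :: "real \<Rightarrow> real"
  assumes cont: "continuous_on {0..1} \<alpha>" "continuous_on {0..1} \<beta>"
      "continuous_on {0..1} \<alpha>'" "continuous_on {0..1} \<beta>'"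
    and pos: "\<And>t. t \<in> {0..1} \<Longrightarrow> 0 < \<alpha> t" "\<And>t. t \<in> {0..1} \<Longrightarrow> 0 < \<beta> t"
      "\<And>t. t \<in> {0..1} \<Longrightarrow> 0 < \<alpha>' t" "\<And>t. t \<in> {0..1} \<Longrightarrow> 0 < \<beta>' t"
    and cross: "\<And>s u. s \<in> {0..1} \<Longrightarrow> u \<in> {0..1} \<Longrightarrow> \<beta> u * \<alpha>' s \<le> \<alpha> s * \<beta>' u"
  shows "cheb_integral (\<lambda>t. 1 / sqrt (\<alpha> t)) / cheb_integral (\<lambda>t. 1 / sqrt (\<beta> t))
       \<le> cheb_integral (\<lambda>t. 1 / sqrt (\<alpha>' t)) / cheb_integral (\<lambda>t. 1 / sqrt (\<beta>' t))"
proof -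
  obtain C where C: "\<And>s. s \<in> {0..1} \<Longrightarrow> C * \<alpha>' s \<le> \<alpha> s" "\<And>u. u \<in> {0..1} \<Longrightarrow> \<beta> u \<le> C * \<beta>' u"
    using ratio_separating_constant[of "{0..1::real}" \<alpha>' \<beta>' \<beta> \<alpha>] pos cross by auto
  have "0 < C * \<beta>' 0"
    using C(2)[of 0] pos(2)[of 0] by simp
  then have "0 < C"
    using pos(4)[of 0] by (simp add: zero_less_mult_iff)
  show ?thesis
  proof (rule cheb_integral_ratio_le)
    show "0 < sqrt C" using \<open>0 < C\<close> by simp
    show "sqrt C * (1 / sqrt (\<alpha> t)) \<le> 1 / sqrt (\<alpha>' t)" if "t \<in> {0..1}" for t
    proof -
      have "sqrt C * sqrt (\<alpha>' t) \<le> sqrt (\<alpha> t)"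
        using C(1)[OF that] by (simp add: real_sqrt_mult[symmetric])
      then show ?thesis using pos(1,3)[OF that] by (simp add: field_simps)
    qed
    show "1 / sqrt (\<beta>' t) \<le> sqrt C * (1 / sqrt (\<beta> t))" if "t \<in> {0..1}" for t
    proof -
      have "sqrt (\<beta> t) \<le> sqrt C * sqrt (\<beta>' t)"
        using C(2)[OF that] by (simp add: real_sqrt_mult[symmetric])
      then show ?thesis using pos(2,4)[OF that] by (simp add: field_simps)
    qed
  qed (use cont pos in \<open>fastforce intro!: continuous_intros\<close>)+
qed

lemma has_integral_sqrt_substitution:
  fixes h :: "real \<Rightarrow> real"
  assumes "0 < P" and "((\<lambda>t. h (P * t\<^sup>2) / sqrt (1 - t\<^sup>2)) has_integral I) {0..1}"
  shows "((\<lambda>\<xi>. h (\<xi>\<^sup>2) / sqrt (P - \<xi>\<^sup>2)) has_integral I) {0..sqrt P}"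
proof -
  define s where "s = sqrt P"
  have "0 < s" "s\<^sup>2 = P" using assms(1) by (auto simp: s_def)
  have "(\<lambda>t. t * s) ` {0..1} = {0..s}"
    using \<open>0 < s\<close> by (auto simp: image_iff intro!: bexI[where x = "_ / s"])
  then have "((\<lambda>\<xi>. h (P * (\<xi> / s)\<^sup>2) / sqrt (1 - (\<xi> / s)\<^sup>2)) has_integral s * I) {0..s}"
    using has_integral_stretch_real[OF assms(2), of "1 / s"] \<open>0 < s\<close> by simp
  from has_integral_divide[OF this, of s]
  have "((\<lambda>\<xi>. h (P * (\<xi> / s)\<^sup>2) / sqrt (1 - (\<xi> / s)\<^sup>2) / s) has_integral I) {0..s}"
    using \<open>0 < s\<close> by simp
  moreover have "h (P * (\<xi> / s)\<^sup>2) / sqrt (1 - (\<xi> / s)\<^sup>2) / s = h (\<xi>\<^sup>2) / sqrt (P - \<xi>\<^sup>2)" for \<xi>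
  proof -
    have "sqrt (1 - (\<xi> / s)\<^sup>2) * s = sqrt ((1 - (\<xi> / s)\<^sup>2) * s\<^sup>2)"
      using \<open>0 < s\<close> by (simp add: real_sqrt_mult)
    also have "(1 - (\<xi> / s)\<^sup>2) * s\<^sup>2 = P - \<xi>\<^sup>2"
      using \<open>0 < s\<close> \<open>s\<^sup>2 = P\<close>[symmetric] by (simp add: field_simps power_divide)
    finally have "sqrt (1 - (\<xi> / s)\<^sup>2) * s = sqrt (P - \<xi>\<^sup>2)" .
    moreover have "P * (\<xi> / s)\<^sup>2 = \<xi>\<^sup>2"
      using \<open>0 < s\<close> \<open>s\<^sup>2 = P\<close>[symmetric] by (simp add: power_divide)
    ultimately show ?thesis by (simp add: divide_divide_eq_left)
  qed
  ultimately show ?thesis by (simp add: s_def)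
qed

text \<open>With \<open>r = stark_r a d\<close> the quartics of \<^const>\<open>T_xi\<close> and \<^const>\<open>T_eta\<close> factor as
  \<open>(r + a - \<xi>\<^sup>2) * (2 / r + a - r - \<xi>\<^sup>2)\<close> and \<open>(r - a - \<eta>\<^sup>2) * (2 / r + a + r + \<eta>\<^sup>2)\<close>;
  under \<open>\<xi> = sqrt (r + a) * t\<close>, \<open>\<eta> = sqrt (r - a) * t\<close> the second factors become
  the following affine functions of \<open>s = t\<^sup>2\<close>.\<close>

definition xi_reduced :: "real \<Rightarrow> real \<Rightarrow> real \<Rightarrow> real" where
  "xi_reduced a r s = 2 / r + a - r - (r + a) * s"

definition eta_reduced :: "real \<Rightarrow> real \<Rightarrow> real \<Rightarrow> real" where
  "eta_reduced a r s = 2 / r + a + r + (r - a) * s"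

definition xi_quarter_period :: "real \<Rightarrow> real \<Rightarrow> real" where
  "xi_quarter_period a r = cheb_integral (\<lambda>t. 1 / sqrt (xi_reduced a r (t\<^sup>2)))"

definition eta_quarter_period :: "real \<Rightarrow> real \<Rightarrow> real" where
  "eta_quarter_period a r = cheb_integral (\<lambda>t. 1 / sqrt (eta_reduced a r (t\<^sup>2)))"

lemma stark_r_bounds:
  assumes "0 < d" "d < sqrt (1 - a\<^sup>2)"
  shows "\<bar>a\<bar> < stark_r a d" "stark_r a d < 1"
proof -
  have "0 < 1 - a\<^sup>2"
    using assms by (metis order.strict_trans real_sqrt_gt_0_iff)
  have "d\<^sup>2 < (sqrt (1 - a\<^sup>2))\<^sup>2"
    using assms by (intro power_strict_mono) auto
  then have "d\<^sup>2 < 1 - a\<^sup>2"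
    using \<open>0 < 1 - a\<^sup>2\<close> by simp
  then have "sqrt (a\<^sup>2 + d\<^sup>2) < sqrt 1"
    by (intro real_sqrt_less_mono) simp
  then show "stark_r a d < 1"
    by (simp add: stark_r_def)
  have "sqrt (a\<^sup>2) < sqrt (a\<^sup>2 + d\<^sup>2)"
    by (rule real_sqrt_less_mono) (use assms(1) in simp)
  then show "\<bar>a\<bar> < stark_r a d"
    by (simp add: stark_r_def)
qed

lemma stark_r_mono: "0 \<le> d \<Longrightarrow> d \<le> d' \<Longrightarrow> stark_r a d \<le> stark_r a d'"
  by (simp add: stark_r_def power_mono)

lemma stark_c_eq: "stark_r a d = r \<Longrightarrow> stark_c a d = a / r - (r\<^sup>2 - a\<^sup>2) / 2"
  by (auto simp: stark_c_def stark_r_def)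

lemma stark_xi_quartic:
  assumes "stark_r a d = r" "r \<noteq> 0"
  shows "\<xi>^4 + 2 * stark_H a d * \<xi>\<^sup>2 + 2 * (stark_c a d + 1) = (2 / r + a - r - \<xi>\<^sup>2) * (r + a - \<xi>\<^sup>2)"
  using assms by (simp add: stark_c_eq stark_H_def field_simps power2_eq_square power4_eq_xxxx)

lemma stark_eta_quartic:
  assumes "stark_r a d = r" "r \<noteq> 0"
  shows "- (\<eta>^4) + 2 * stark_H a d * \<eta>\<^sup>2 - 2 * (stark_c a d - 1) = (2 / r + a + r + \<eta>\<^sup>2) * (r - a - \<eta>\<^sup>2)"
  using assms by (simp add: stark_c_eq stark_H_def field_simps power2_eq_square power4_eq_xxxx)

lemma xi1_eq:
  assumes "stark_r a d = r" "0 < r" "r \<le> 1"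
  shows "xi1 a d = sqrt (r + a)"
proof -
  have "(stark_H a d)\<^sup>2 - 2 * (stark_c a d + 1) = (1 / r - r)\<^sup>2"
    using assms by (simp add: stark_c_eq stark_H_def field_simps power2_eq_square)
  moreover have "r \<le> 1 / r"
    using assms(2,3) by (simp add: le_divide_eq power2_eq_square[symmetric] power_le_one)
  ultimately show ?thesis
    using assms by (simp add: xi1_def stark_H_def)
qed

lemma eta1_eq:
  assumes "stark_r a d = r" "0 < r"
  shows "eta1 a d = sqrt (r - a)"
proof -
  have "(stark_H a d)\<^sup>2 - 2 * (stark_c a d - 1) = (1 / r + r)\<^sup>2"
    using assms by (simp add: stark_c_eq stark_H_def field_simps power2_eq_square)
  then show ?thesis
    using assms by (simp add: eta1_def stark_H_def)
qed

lemma xi_reduced_pos: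
  assumes "\<bar>a\<bar> < r" "r < 1" "s \<le> 1"
  shows "0 < xi_reduced a r s"
proof -
  have "0 < r"
    using assms(1) abs_ge_zero[of a] by linarith
  have "r * r < 1 * 1"
    using assms(1,2) by (intro mult_strict_mono) auto
  then have "r < 1 / r"
    using \<open>0 < r\<close> by (simp add: less_divide_eq)
  moreover have "(r + a) * s \<le> r + a"
    using assms by (simp add: mult_left_le)
  ultimately show ?thesis
    by (simp add: xi_reduced_def)
qed

lemma eta_reduced_pos:
  assumes "\<bar>a\<bar> < r" "0 \<le> s"
  shows "0 < eta_reduced a r s"
proof -
  have "0 < 2 / r" "0 < r + a" "0 \<le> (r - a) * s"
    using assms by auto
  then show ?thesis
    unfolding eta_reduced_def by linarith
qed

lemma continuous_on_xi_reduced: "continuous_on S (\<lambda>t. xi_reduced a r (t\<^sup>2))"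
  unfolding xi_reduced_def by (intro continuous_intros)

lemma continuous_on_eta_reduced: "continuous_on S (\<lambda>t. eta_reduced a r (t\<^sup>2))"
  unfolding eta_reduced_def by (intro continuous_intros)

lemma T_xi_eq:
  assumes "\<bar>a\<bar> < stark_r a d" "stark_r a d < 1"
  shows "T_xi a d = 4 * xi_quarter_period a (stark_r a d)"
proof -
  define r where "r = stark_r a d"
  have r: "\<bar>a\<bar> < r" "r < 1" "stark_r a d = r" using assms by (auto simp: r_def)
  define h where "h v = 1 / sqrt (2 / r + a - r - v)" for v
  have "continuous_on {0..1} (\<lambda>t. 1 / sqrt (xi_reduced a r (t\<^sup>2)))"
    using xi_reduced_pos[OF r(1,2)]
    by (intro continuous_intros continuous_on_xi_reduced) (auto simp: power_le_one less_imp_neq[symmetric])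
  from has_integral_cheb_integral[OF this]
  have "((\<lambda>t. h ((r + a) * t\<^sup>2) / sqrt (1 - t\<^sup>2)) has_integral xi_quarter_period a r) {0..1}"
    by (simp add: h_def xi_reduced_def xi_quarter_period_def algebra_simps)
  from has_integral_sqrt_substitution[OF _ this]
  have "((\<lambda>\<xi>. h (\<xi>\<^sup>2) / sqrt (r + a - \<xi>\<^sup>2)) has_integral xi_quarter_period a r) {0..xi1 a d}"
    using r xi1_eq[OF r(3)] by simp
  moreover have "h (\<xi>\<^sup>2) / sqrt (r + a - \<xi>\<^sup>2)
      = 1 / sqrt (\<xi>^4 + 2 * stark_H a d * \<xi>\<^sup>2 + 2 * (stark_c a d + 1))" for \<xi>
    using r stark_xi_quartic[OF r(3), of \<xi>] by (simp add: h_def real_sqrt_mult[symmetric])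
  ultimately show ?thesis
    by (simp add: T_xi_def r_def integral_unique)
qed

lemma T_eta_eq:
  assumes "\<bar>a\<bar> < stark_r a d"
  shows "T_eta a d = 4 * eta_quarter_period a (stark_r a d)"
proof -
  define r where "r = stark_r a d"
  have r: "\<bar>a\<bar> < r" "stark_r a d = r" using assms by (auto simp: r_def)
  define h where "h v = 1 / sqrt (2 / r + a + r + v)" for v
  have "continuous_on {0..1} (\<lambda>t. 1 / sqrt (eta_reduced a r (t\<^sup>2)))"
    using eta_reduced_pos[OF r(1)]
    by (intro continuous_intros continuous_on_eta_reduced) (auto simp: less_imp_neq[symmetric])
  from has_integral_cheb_integral[OF this]
  have "((\<lambda>t. h ((r - a) * t\<^sup>2) / sqrt (1 - t\<^sup>2)) has_integral eta_quarter_period a r) {0..1}"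
    by (simp add: h_def eta_reduced_def eta_quarter_period_def algebra_simps)
  from has_integral_sqrt_substitution[OF _ this]
  have "((\<lambda>\<eta>. h (\<eta>\<^sup>2) / sqrt (r - a - \<eta>\<^sup>2)) has_integral eta_quarter_period a r) {0..eta1 a d}"
    using r eta1_eq[OF r(2)] by simp
  moreover have "h (\<eta>\<^sup>2) / sqrt (r - a - \<eta>\<^sup>2)
      = 1 / sqrt (- (\<eta>^4) + 2 * stark_H a d * \<eta>\<^sup>2 - 2 * (stark_c a d - 1))" for \<eta>
    using r stark_eta_quartic[OF r(2), of \<eta>] by (simp add: h_def real_sqrt_mult[symmetric])
  ultimately show ?thesis
    by (simp add: T_eta_def r_def integral_unique)
qed

lemma reduced_cross_le:
  assumes "\<bar>a\<bar> < x" "x \<le> y" "y < 1" and s: "s \<in> {0..1}" and u: "u \<in> {0..1}"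
  shows "eta_reduced a x u * xi_reduced a y s \<le> xi_reduced a x s * eta_reduced a y u"
proof -
  define E where "E = a * (s - u) + (x + y) * (2 + s + u) + a * x * y * (1 - s * u)"
  have "0 < x" "0 < y" using assms by auto
  have identity: "x * y * (xi_reduced a x s * eta_reduced a y u - eta_reduced a x u * xi_reduced a y s)
      = 2 * (y - x) * E"
    using \<open>0 < x\<close> \<open>0 < y\<close>
    by (simp add: E_def xi_reduced_def eta_reduced_def field_simps)
  have "0 \<le> E"
  proof -
    have bound1: "\<bar>a * (s - u)\<bar> \<le> \<bar>a\<bar>"
      using s u by (auto simp: abs_mult intro: mult_left_le)
    have "0 \<le> x * y * (1 - s * u)" "x * y * (1 - s * u) \<le> 1"
      using assms \<open>0 < x\<close> by (auto simp: mult_le_one)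
    then have bound2: "\<bar>a * x * y * (1 - s * u)\<bar> \<le> \<bar>a\<bar>"
      by (auto simp: abs_mult mult.assoc intro: mult_left_le)
    have "0 \<le> (x + y) * (s + u)"
      using s u \<open>0 < x\<close> \<open>0 < y\<close> by simp
    then have "2 * x + 2 * y \<le> (x + y) * (2 + s + u)"
      by (simp add: algebra_simps)
    then show ?thesis
      unfolding E_def using abs_le_D2[OF bound1] abs_le_D2[OF bound2] assms(1,2) by linarith
  qed
  with assms(2) have "0 \<le> x * y * (xi_reduced a x s * eta_reduced a y u - eta_reduced a x u * xi_reduced a y s)"
    unfolding identity by simp
  then show ?thesis
    using mult_pos_pos[OF \<open>0 < x\<close> \<open>0 < y\<close>] by (simp add: zero_le_mult_iff)
qed

lemma quarter_period_ratio_mono: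
  assumes "\<bar>a\<bar> < x" "x \<le> y" "y < 1"
  shows "xi_quarter_period a x / eta_quarter_period a x \<le> xi_quarter_period a y / eta_quarter_period a y"
  unfolding xi_quarter_period_def eta_quarter_period_def
proof (rule cheb_integral_inverse_sqrt_ratio_le)
  show "eta_reduced a x (u\<^sup>2) * xi_reduced a y (s\<^sup>2) \<le> xi_reduced a x (s\<^sup>2) * eta_reduced a y (u\<^sup>2)"
    if "s \<in> {0..1}" "u \<in> {0..1}" for s u
    using that assms by (intro reduced_cross_le) (auto simp: power_le_one)
qed (use assms in \<open>auto intro!: xi_reduced_pos eta_reduced_pos continuous_on_xi_reduced
      continuous_on_eta_reduced simp: power_le_one\<close>)

theorem proposition3p3:
  fixes a :: real
  assumes "-1 < a" and "a < 1"
  shows "mono_on {0<..<sqrt (1 - a\<^sup>2)} (\<lambda>d. T_xi a d / T_eta a d)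
       \<or> antimono_on {0<..<sqrt (1 - a\<^sup>2)} (\<lambda>d. T_xi a d / T_eta a d)"
proof (rule disjI1, rule mono_onI)
  fix d d' assume d: "d \<in> {0<..<sqrt (1 - a\<^sup>2)}" and d': "d' \<in> {0<..<sqrt (1 - a\<^sup>2)}" and "d \<le> d'"
  have r: "\<bar>a\<bar> < stark_r a d" "stark_r a d < 1" and r': "\<bar>a\<bar> < stark_r a d'" "stark_r a d' < 1"
    using stark_r_bounds d d' by auto
  have "stark_r a d \<le> stark_r a d'"
    using d \<open>d \<le> d'\<close> by (intro stark_r_mono) auto
  from quarter_period_ratio_mono[OF r(1) this r'(2)]
  show "T_xi a d / T_eta a d \<le> T_xi a d' / T_eta a d'"
    by (simp add: T_xi_eq[OF r] T_eta_eq[OF r(1)] T_xi_eq[OF r'] T_eta_eq[OF r'(1)])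
qed

end
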